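(* Let $X,Y,Z,W$ be mm-spaces and $F\in\mathcal F^2$. Then $$\square(X\times_FZ,Y\times_FW)\le\max\Big\{\square(X,Y)+\square(Z,W),\ 2F\big(\tfrac12\square(X,Y),\tfrac12\square(Z,W)\big)\Big\}.$$ In particular, for every $p\in[1,+\infty]$, $\square(X\times_pZ,Y\times_pW)\le\square(X,Y)+\square(Z,W)$.
   Context: An mm-space is a triple $(X,d_X,m_X)$ with $(X,d_X)$ complete separable metric space and $m_X$ a Borel probability measure. $\mathcal F^2$: continuous $F\colon[0,+\infty)^2\to[0,+\infty)$ such that $d_F((x,y),(x',y')):=F(d_X(x,x'),d_Y(y,y'))$ is a metric on $X\times Y$ for all metric spaces; $X\times_FY:=(X\times Y,d_F,m_X\otimes m_Y)$; $X\times_pY:=X\times_{F_p}Y$ with $F_p(s,t)=(s^p+t^p)^{1/p}$ ($p<\infty$), $F_\infty=\max$. Box distance: with $I=[0,1)$, Lebesgue measure $\mathcal L^1$, and parameters (Borel maps $\varphi\colon I\to X$ with $\varphi_*\mathcal L^1=m_X$), $\square(X,Y)$ is the infimum of $\varepsilon\ge0$ such that there exist parameters $\varphi$ of $X$, $\psi$ of $Y$ and a Borel $I_0\subset I$ with $\mathcal L^1(I_0)\ge1-\varepsilon$ and $|d_X(\varphi(s),\varphi(t))-d_Y(\psi(s),\psi(t))|\le\varepsilon$ for all $s,t\in I_0$. *)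

theory Defs
  imports "HOL-Analysis.Analysis" "HOL-Probability.Probability"
begin

text \<open>An mm-space is represented by a pair (d, m): a distance function d on the
  carrier space m and a Borel probability measure m.  The carrier of the space is
  space m.\<close>

type_synonym 'a mm = "('a \<Rightarrow> 'a \<Rightarrow> real) \<times> 'a measure"

definition mm_space :: "'a mm \<Rightarrow> bool" where
  "mm_space X \<longleftrightarrow> (case X of (d, m) \<Rightarrow>
     Metric_space (space m) d
   \<and> Metric_space.mcomplete (space m) d
   \<and> separable_space (Metric_space.mtopology (space m) d)
   \<and> sets m = sigma_sets (space m) {U. openin (Metric_space.mtopology (space m) d) U}
   \<and> prob_space m)"

text \<open>The class F^2.  Since the metric axioms only involve at most three points of
  each factor at a time, quantifying over all metric spaces on subsets of nat is
  equivalent to quantifying over all metric spaces.\<close>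

definition F2 :: "(real \<Rightarrow> real \<Rightarrow> real) set" where
  "F2 = {F. continuous_on ({0..} \<times> {0..}) (\<lambda>(s, t). F s t)
          \<and> (\<forall>s\<ge>0. \<forall>t\<ge>0. F s t \<ge> 0)
          \<and> (\<forall>(A::nat set) dA (B::nat set) dB.
               Metric_space A dA \<longrightarrow> Metric_space B dB \<longrightarrow>
               Metric_space (A \<times> B) (\<lambda>(x, y) (x', y'). F (dA x x') (dB y y')))}"

definition mm_prod :: "(real \<Rightarrow> real \<Rightarrow> real) \<Rightarrow> 'a mm \<Rightarrow> 'b mm \<Rightarrow> ('a \<times> 'b) mm" where
  "mm_prod F X Y = (case X of (dX, mX) \<Rightarrow> case Y of (dY, mY) \<Rightarrow>
     ((\<lambda>(x, y) (x', y'). F (dX x x') (dY y y')), mX \<Otimes>\<^sub>M mY))"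

definition Fp :: "ereal \<Rightarrow> real \<Rightarrow> real \<Rightarrow> real" where
  "Fp p s t = (if p = \<infinity> then max s t
               else (s powr real_of_ereal p + t powr real_of_ereal p) powr (1 / real_of_ereal p))"

definition unitI :: "real measure" where
  "unitI = restrict_space lborel {0..<1}"

definition parameter :: "'a mm \<Rightarrow> (real \<Rightarrow> 'a) \<Rightarrow> bool" where
  "parameter X \<phi> \<longleftrightarrow> \<phi> \<in> unitI \<rightarrow>\<^sub>M snd X \<and> distr unitI (snd X) \<phi> = snd X"

definition box :: "'a mm \<Rightarrow> 'b mm \<Rightarrow> real" where
  "box X Y = Inf {\<epsilon>. \<epsilon> \<ge> 0 \<and> (\<exists>\<phi> \<psi> I0. parameter X \<phi> \<and> parameter Y \<psi>
       \<and> I0 \<in> sets unitI \<and> measure unitI I0 \<ge> 1 - \<epsilon>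
       \<and> (\<forall>s\<in>I0. \<forall>t\<in>I0. \<bar>fst X (\<phi> s) (\<phi> t) - fst Y (\<psi> s) (\<psi> t)\<bar> \<le> \<epsilon>))}"

end

theory Submission
  imports Defs
begin

text \<open>Parameters for the two products are obtained from given parameters \<open>\<phi>, \<psi>\<close> of
  \<open>X, Y\<close> and \<open>\<phi>', \<psi>'\<close> of \<open>Z, W\<close> by composing with one measure-preserving map
  \<open>\<alpha> = (\<alpha>\<^sub>1, \<alpha>\<^sub>2) : I \<rightarrow> I \<times> I\<close>: \<open>s \<mapsto> (\<phi> (\<alpha>\<^sub>1 s), \<phi>' (\<alpha>\<^sub>2 s))\<close> and likewise for \<open>\<psi>, \<psi>'\<close>.
  If \<open>I\<^sub>0, J\<^sub>0\<close> are the good sets of the two box estimates with errors \<open>\<epsilon>\<^sub>1, \<epsilon>\<^sub>2\<close>, then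
  \<open>\<alpha>\<^sup>-\<^sup>1 (I\<^sub>0 \<times> J\<^sub>0)\<close> has measure at least \<open>(1 - \<epsilon>\<^sub>1) (1 - \<epsilon>\<^sub>2) \<ge> 1 - \<epsilon>\<^sub>1 - \<epsilon>\<^sub>2\<close>, and on it the
  product distances are values \<open>F a b\<close>, \<open>F a' b'\<close> with \<open>\<bar>a - a'\<bar> \<le> \<epsilon>\<^sub>1\<close>, \<open>\<bar>b - b'\<bar> \<le> \<epsilon>\<^sub>2\<close>.
  Testing the metric property of \<open>d\<^sub>F\<close> on small metric spaces bounds
  \<open>\<bar>F a b - F a' b'\<bar>\<close> by \<open>2 F (\<epsilon>\<^sub>1/2) (\<epsilon>\<^sub>2/2)\<close>; for \<open>F\<^sub>p\<close> the Minkowski inequality bounds it by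
  \<open>\<epsilon>\<^sub>1 + \<epsilon>\<^sub>2\<close>.  Letting \<open>\<epsilon>\<^sub>i\<close> decrease to the box distances gives the theorem.

  The map \<open>\<alpha>\<close>, and parameters of arbitrary mm-spaces, come from the fact that every
  Polish probability space (and \<open>I \<times> I\<close>) embeds Borel-measurably into \<open>\<real>\<close> with a
  measurable left inverse; pushing forward the quantile function of the image
  distribution along the left inverse gives a parameter.\<close>

section \<open>Coding bit sequences by reals\<close>

text \<open>Digits are taken in base 4 but only 0 and 1 occur, so every tail of the series is
  at most \<open>1/3\<close> and each digit is read off exactly by floors.\<close>

definition encode_bits :: "(nat \<Rightarrow> bool) \<Rightarrow> real" where
  "encode_bits b = (\<Sum>j. of_bool (b j) / 4 ^ Suc j)"

definition decode_bits :: "real \<Rightarrow> nat \<Rightarrow> bool" where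
  "decode_bits y n \<longleftrightarrow> \<lfloor>4 ^ Suc n * y\<rfloor> - 4 * \<lfloor>4 ^ n * y\<rfloor> = 1"

lemma summable_encode_bits: "summable (\<lambda>j. of_bool (b j) / (4::real) ^ Suc j)"
proof (rule summable_comparison_test)
  show "\<exists>N. \<forall>n\<ge>N. norm (of_bool (b n) / (4::real) ^ Suc n) \<le> (1 / 4) ^ Suc n"
    by (auto simp: power_divide)
  show "summable (\<lambda>j. (1 / 4 :: real) ^ Suc j)"
    using summable_geometric[of "1 / 4 :: real"] by (simp add: summable_Suc_iff)
qed

lemma encode_bits_bounds: "0 \<le> encode_bits b" "encode_bits b \<le> 1 / 3"
proof -
  show "0 \<le> encode_bits b"
    unfolding encode_bits_def by (rule suminf_nonneg[OF summable_encode_bits]) simp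
  have geom: "(\<lambda>j. (1 / 4 :: real) ^ Suc j) sums (1 / 3)"
    using sums_mult[OF geometric_sums[of "1 / 4 :: real"], of "1 / 4"] by (simp add: power_Suc)
  have "encode_bits b \<le> (\<Sum>j. (1 / 4 :: real) ^ Suc j)"
    unfolding encode_bits_def
    by (rule suminf_le[OF _ summable_encode_bits sums_summable[OF geom]]) (simp add: power_divide)
  then show "encode_bits b \<le> 1 / 3"
    using sums_unique[OF geom] by simp
qed

fun bits_prefix_value :: "(nat \<Rightarrow> bool) \<Rightarrow> nat \<Rightarrow> int" where
  "bits_prefix_value b 0 = 0"
| "bits_prefix_value b (Suc n) = 4 * bits_prefix_value b n + of_bool (b n)"

lemma sum_bits_prefix:
  "(\<Sum>j<N. of_bool (b j) / (4::real) ^ Suc j) = bits_prefix_value b N / 4 ^ N"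
  by (induction N) (simp_all add: field_simps)

lemma floor_encode_bits: "\<lfloor>4 ^ N * encode_bits b\<rfloor> = bits_prefix_value b N"
proof -
  define tail where "tail = encode_bits (\<lambda>j. b (j + N))"
  have "encode_bits b = (\<Sum>j. of_bool (b (j + N)) / (4::real) ^ Suc (j + N))
                        + (\<Sum>j<N. of_bool (b j) / 4 ^ Suc j)"
    unfolding encode_bits_def by (rule suminf_split_initial_segment[OF summable_encode_bits])
  also have "(\<Sum>j. of_bool (b (j + N)) / (4::real) ^ Suc (j + N)) = tail / 4 ^ N"
    unfolding tail_def encode_bits_def
    using suminf_divide[OF summable_encode_bits[of "\<lambda>j. b (j + N)"], of "4 ^ N"]
    by (simp add: power_add mult_ac)
  finally have "4 ^ N * encode_bits b = tail + bits_prefix_value b N"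
    by (simp only: sum_bits_prefix) (simp add: field_simps)
  then show ?thesis
    using encode_bits_bounds[of "\<lambda>j. b (j + N)"] unfolding tail_def[symmetric]
    by (simp add: floor_unique)
qed

lemma decode_encode_bits [simp]: "decode_bits (encode_bits b) = b"
  by (rule ext) (simp only: decode_bits_def floor_encode_bits, simp)

lemma decode_bits_measurable [measurable]: "Measurable.pred borel (\<lambda>y. decode_bits y n)"
  unfolding decode_bits_def by measurable

lemma encode_bits_measurable:
  assumes "\<And>j. Measurable.pred M (\<lambda>x. b x j)"
  shows "(\<lambda>x. encode_bits (b x)) \<in> borel_measurable M"
  unfolding encode_bits_def using assms by measurable

section \<open>Parameters from Borel embeddings into the reals\<close>

definition real_embeddable :: "'a measure \<Rightarrow> bool" where
  "real_embeddable M \<longleftrightarrow> (\<exists>g h. g \<in> M \<rightarrow>\<^sub>M borel \<and> h \<in> (borel :: real measure) \<rightarrow>\<^sub>M M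
                                \<and> (\<forall>x\<in>space M. h (g x) = x))"

lemma prob_space_unitI: "prob_space unitI"
  unfolding unitI_def by (rule prob_space_restrict_space) auto

lemma distr_unitI_eq_open_interval:
  assumes f: "f \<in> borel \<rightarrow>\<^sub>M N"
  shows "distr unitI N f = distr (restrict_space lborel {0<..<1}) N f"
proof (rule measure_eqI)
  fix A assume "A \<in> sets (distr unitI N f)"
  then have A: "A \<in> sets N" by simp
  have open_part: "f -` A \<inter> {0<..<1} \<in> sets borel"
    using measurable_sets[OF f A] by auto
  have f_unitI: "f \<in> unitI \<rightarrow>\<^sub>M N"
    unfolding unitI_def by (rule measurable_restrict_space1) (use f in simp)
  have "f -` A \<inter> {0..<1} = (f -` A \<inter> {0<..<1}) \<union> (if f 0 \<in> A then {0} else {})"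
    by (rule set_eqI) (auto simp: le_less)
  then have "emeasure lborel (f -` A \<inter> {0..<1}) = emeasure lborel (f -` A \<inter> {0<..<1})"
    using open_part emeasure_Un_null_set[of _ lborel "{0::real}"]
      finite_imp_null_set_lborel[of "{0::real}"] by (cases "f 0 \<in> A") simp_all
  then show "emeasure (distr unitI N f) A
           = emeasure (distr (restrict_space lborel {0<..<1}) N f) A"
    using A f f_unitI open_part
    by (simp add: emeasure_distr unitI_def emeasure_restrict_space space_restrict_space
        measurable_restrict_space1 Int_commute)
qed simp

lemma exists_unitI_quantile:
  assumes "real_distribution N"
  shows "\<exists>Q. Q \<in> unitI \<rightarrow>\<^sub>M borel \<and> distr unitI borel Q = N"
proof -
  interpret cdf_distribution N
    using assms unfolding cdf_distribution_def .
  text \<open>The quantile function \<open>I\<close> is only meaningful on \<open>(0, 1)\<close>.\<close>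
  define Q where "Q \<omega> = indicator {0<..<1} \<omega> * I \<omega>" for \<omega>
  have Q_borel: "Q \<in> borel_measurable borel"
    using measurable_CI borel_measurable_restrict_space_iff[of "{0<..<1::real}" borel I]
    unfolding Q_def by simp
  have "distr unitI borel Q = distr (restrict_space lborel {0<..<1}) borel I"
    unfolding distr_unitI_eq_open_interval[OF Q_borel]
    by (rule distr_cong) (auto simp: Q_def space_restrict_space)
  moreover have "Q \<in> unitI \<rightarrow>\<^sub>M borel"
    unfolding unitI_def by (rule measurable_restrict_space1) (use Q_borel in simp)
  ultimately show ?thesis
    using distr_I_eq_M by auto
qed

lemma exists_parameter_if_real_embeddable:
  assumes M: "prob_space M" and "real_embeddable M"
  shows "\<exists>\<phi>. \<phi> \<in> unitI \<rightarrow>\<^sub>M M \<and> distr unitI M \<phi> = M"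
proof -
  obtain g h where g: "g \<in> M \<rightarrow>\<^sub>M borel" and h: "h \<in> (borel :: real measure) \<rightarrow>\<^sub>M M"
    and hg: "\<And>x. x \<in> space M \<Longrightarrow> h (g x) = x"
    using assms(2) unfolding real_embeddable_def by blast
  have "real_distribution (distr M borel g)"
    using M g by (auto simp: real_distribution_def real_distribution_axioms_def
        intro: prob_space.prob_space_distr)
  then obtain Q where Q: "Q \<in> unitI \<rightarrow>\<^sub>M borel" "distr unitI borel Q = distr M borel g"
    using exists_unitI_quantile by blast
  have "distr unitI M (h \<circ> Q) = distr (distr unitI borel Q) M h"
    using Q(1) h by (simp add: distr_distr)
  also have "\<dots> = distr (distr M borel g) M h"
    using Q(2) by simp
  also have "\<dots> = distr M M (h \<circ> g)"
    using g h by (simp add: distr_distr)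
  also have "\<dots> = distr M M (\<lambda>x. x)"
    using hg by (intro distr_cong) auto
  finally show ?thesis
    using measurable_comp[OF Q(1) h] distr_id[of M] by auto
qed

section \<open>Complete separable metric spaces embed into the reals\<close>

lemma measurable_pred_count_space_pair:
  fixes a b :: "'x \<Rightarrow> nat"
  assumes "a \<in> L \<rightarrow>\<^sub>M count_space UNIV" "b \<in> L \<rightarrow>\<^sub>M count_space UNIV"
  shows "Measurable.pred L (\<lambda>y. P (a y) (b y))"
proof (rule measurable_compose_countable[where f = "\<lambda>i y. P i (b y)", OF _ assms(1)])
  fix i show "Measurable.pred L (\<lambda>y. P i (b y))"
    by (rule measurable_compose_countable[where f = "\<lambda>j y. P i j", OF _ assms(2)]) simp
qed

context Metric_space
begin

definition limit_or :: "'a \<Rightarrow> (nat \<Rightarrow> 'a) \<Rightarrow> 'a" where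
  "limit_or a \<sigma> = (if MCauchy \<sigma> then SOME z. limitin mtopology \<sigma> z sequentially else a)"

lemma limitin_limit_or:
  assumes "mcomplete" "MCauchy \<sigma>"
  shows "limitin mtopology \<sigma> (limit_or a \<sigma>) sequentially"
proof -
  obtain z where "limitin mtopology \<sigma> z sequentially"
    using assms unfolding mcomplete_def by blast
  then have "limitin mtopology \<sigma> (SOME z. limitin mtopology \<sigma> z sequentially) sequentially"
    by (rule someI)
  then show ?thesis
    using assms(2) unfolding limit_or_def by simp
qed

lemma limit_or_in_carrier:
  assumes "mcomplete" "a \<in> M"
  shows "limit_or a \<sigma> \<in> M"
  using limitin_mspace[OF limitin_limit_or[OF assms(1)]] assms(2)
  by (cases "MCauchy \<sigma>") (simp_all add: limit_or_def)

lemma MCauchy_iff_inverse_Suc: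
  "MCauchy \<sigma> \<longleftrightarrow> range \<sigma> \<subseteq> M \<and> (\<forall>e. \<exists>N. \<forall>i\<ge>N. \<forall>j\<ge>N. d (\<sigma> i) (\<sigma> j) < 1 / Suc e)"
proof
  assume "MCauchy \<sigma>"
  then show "range \<sigma> \<subseteq> M \<and> (\<forall>e. \<exists>N. \<forall>i\<ge>N. \<forall>j\<ge>N. d (\<sigma> i) (\<sigma> j) < 1 / Suc e)"
    unfolding MCauchy_def by (meson of_nat_0_less_iff zero_less_Suc divide_pos_pos zero_less_one)
next
  assume *: "range \<sigma> \<subseteq> M \<and> (\<forall>e. \<exists>N. \<forall>i\<ge>N. \<forall>j\<ge>N. d (\<sigma> i) (\<sigma> j) < 1 / Suc e)"
  show "MCauchy \<sigma>"
    unfolding MCauchy_def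
  proof (intro conjI allI impI)
    fix \<epsilon> :: real assume "\<epsilon> > 0"
    then obtain e where e: "1 / Suc e < \<epsilon>"
      using nat_approx_posE by blast
    then show "\<exists>N. \<forall>n n'. N \<le> n \<longrightarrow> N \<le> n' \<longrightarrow> d (\<sigma> n) (\<sigma> n') < \<epsilon>"
      using * by (meson less_trans)
  qed (use * in blast)
qed

lemma separable_dense_sequence:
  assumes "separable_space mtopology" "M \<noteq> {}"
  obtains q :: "nat \<Rightarrow> 'a" where "range q \<subseteq> M" "\<And>x r. x \<in> M \<Longrightarrow> 0 < r \<Longrightarrow> \<exists>k. d x (q k) < r"
proof -
  obtain C where C: "countable C" "C \<subseteq> M" "mtopology closure_of C = M"
    using assms(1) unfolding separable_space_def by auto
  have "C \<noteq> {}"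
    using C(3) assms(2) by auto
  show thesis
  proof (rule that[of "from_nat_into C"])
    show "range (from_nat_into C) \<subseteq> M"
      using C(2) from_nat_into[OF \<open>C \<noteq> {}\<close>] by blast
  next
    fix x r assume xr: "x \<in> M" "0 < (r::real)"
    obtain y where "y \<in> C" "y \<in> mball x r"
      using C(3) xr unfolding metric_closure_of by blast
    moreover obtain k where "y = from_nat_into C k"
      using \<open>y \<in> C\<close> C(1) by (metis from_nat_into_surj)
    ultimately show "\<exists>k. d x (from_nat_into C k) < r"
      by auto
  qed
qed

lemma tendsto_mdist_limitin:
  assumes "limitin mtopology \<sigma> z sequentially" "range \<sigma> \<subseteq> M" "y \<in> M"
  shows "((\<lambda>i. d (\<sigma> i) y) \<longlongrightarrow> d z y) sequentially"
proof -
  have z: "z \<in> M"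
    using assms(1) by (rule limitin_mspace)
  have bound: "\<forall>i. norm (d (\<sigma> i) y - d z y) \<le> d (\<sigma> i) z"
  proof
    fix i
    have "\<sigma> i \<in> M"
      using assms(2) by auto
    then show "norm (d (\<sigma> i) y - d z y) \<le> d (\<sigma> i) z"
      using mdist_reverse_triangle[of "\<sigma> i" y z] commute[of y z] z assms(3) by simp
  qed
  have "((\<lambda>i. d (\<sigma> i) z) \<longlongrightarrow> 0) sequentially"
    using assms(1) by (simp add: limitin_metric_dist_null)
  then have "((\<lambda>i. d (\<sigma> i) y - d z y) \<longlongrightarrow> 0) sequentially"
    by (rule Lim_null_comparison[OF always_eventually[OF bound]])
  then show ?thesis
    by (simp add: LIM_zero_iff)
qed

lemma dense_sequence_mball_subset_open:
  assumes q: "range q \<subseteq> M" "\<And>x r. x \<in> M \<Longrightarrow> 0 < r \<Longrightarrow> \<exists>k. d x (q k) < r"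
    and U: "openin mtopology U" "z \<in> U"
  obtains k n where "mball (q k) (2 / Suc n) \<subseteq> U" "d z (q k) < 1 / Suc n"
proof -
  obtain r where r: "r > 0" "mball z r \<subseteq> U"
    using U openin_mtopology by blast
  obtain n where "1 / Suc n < r / 3"
    using nat_approx_posE[of "r / 3"] r by auto
  then have n: "3 / Suc n < r"
    by (simp add: divide_simps)
  have z: "z \<in> M"
    using openin_subset[OF U(1)] U(2) by auto
  obtain k where k: "d z (q k) < 1 / Suc n"
    using q(2)[OF z, of "1 / Suc n"] by auto
  have "mball (q k) (2 / Suc n) \<subseteq> mball z r"
  proof
    fix y assume y: "y \<in> mball (q k) (2 / Suc n)"
    then have "d z y \<le> d z (q k) + d (q k) y"
      using q(1) z by (intro triangle) auto
    moreover have "1 / Suc n + 2 / Suc n = 3 / real (Suc n)"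
      by (simp add: add_divide_distrib[symmetric])
    ultimately have "d z y < r"
      using k y n by auto
    then show "y \<in> mball z r"
      using y z by auto
  qed
  then show ?thesis
    by (rule that[OF order_trans[OF _ r(2)] k])
qed

text \<open>With a dense sequence \<open>q\<close>, membership of a limit in an open set becomes a
  countable combination of eventual distance bounds along the sequence.\<close>

lemma limitin_open_iff_dense_sequence:
  assumes q: "range q \<subseteq> M" "\<And>x r. x \<in> M \<Longrightarrow> 0 < r \<Longrightarrow> \<exists>k. d x (q k) < r"
    and lim: "limitin mtopology \<sigma> z sequentially" "range \<sigma> \<subseteq> M"
    and U: "openin mtopology U"
  shows "z \<in> U \<longleftrightarrow>
    (\<exists>k n. mball (q k) (2 / Suc n) \<subseteq> U \<and> (\<exists>N. \<forall>i\<ge>N. d (\<sigma> i) (q k) < 1 / Suc n))"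
proof
  assume "z \<in> U"
  then obtain k n where kn: "mball (q k) (2 / Suc n) \<subseteq> U" "d z (q k) < 1 / Suc n"
    using dense_sequence_mball_subset_open[OF q U] by blast
  have "q k \<in> M"
    using q(1) by auto
  from order_tendstoD(2)[OF tendsto_mdist_limitin[OF lim this] kn(2)]
  have "\<exists>N. \<forall>i\<ge>N. d (\<sigma> i) (q k) < 1 / Suc n"
    by (simp add: eventually_sequentially)
  with kn(1) show "\<exists>k n. mball (q k) (2 / Suc n) \<subseteq> U \<and> (\<exists>N. \<forall>i\<ge>N. d (\<sigma> i) (q k) < 1 / Suc n)"
    by blast
next
  assume "\<exists>k n. mball (q k) (2 / Suc n) \<subseteq> U \<and> (\<exists>N. \<forall>i\<ge>N. d (\<sigma> i) (q k) < 1 / Suc n)"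
  then obtain k n N where kn: "mball (q k) (2 / Suc n) \<subseteq> U" "\<forall>i\<ge>N. d (\<sigma> i) (q k) < 1 / Suc n"
    by blast
  have qk: "q k \<in> M"
    using q(1) by auto
  have "d z (q k) \<le> 1 / Suc n"
    using kn(2)
    by (intro tendsto_upperbound[OF tendsto_mdist_limitin[OF lim qk]])
       (auto simp: eventually_sequentially intro: less_imp_le)
  also have "\<dots> < 2 / Suc n"
    by (simp add: divide_strict_right_mono)
  finally have "z \<in> mball (q k) (2 / Suc n)"
    using limitin_mspace[OF lim(1)] qk by (simp add: commute)
  then show "z \<in> U"
    using kn(1) by blast
qed

lemma limitin_if_mdist_less_inverse_Suc:
  assumes "x \<in> M" "range \<sigma> \<subseteq> M" "\<And>n. d x (\<sigma> n) < 1 / Suc n"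
  shows "limitin mtopology \<sigma> x sequentially"
  unfolding limitin_metric_dist_null
proof (intro conjI always_eventually allI)
  have "\<forall>n. norm (d (\<sigma> n) x) \<le> inverse (real (Suc n))"
    using assms by (simp add: commute less_imp_le inverse_eq_divide)
  then show "(\<lambda>n. d (\<sigma> n) x) \<longlonglongrightarrow> 0"
    by (rule Lim_null_comparison[OF always_eventually LIMSEQ_inverse_real_of_nat])
qed (use assms in auto)

lemma measurable_limit_or:
  fixes q :: "nat \<Rightarrow> 'a"
  assumes complete: "mcomplete" and N: "sets N = sigma_sets M {U. openin mtopology U}"
    and q: "range q \<subseteq> M" "\<And>x r. x \<in> M \<Longrightarrow> 0 < r \<Longrightarrow> \<exists>k. d x (q k) < r"
    and c: "\<And>n. c n \<in> L \<rightarrow>\<^sub>M count_space UNIV"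
  shows "(\<lambda>y. limit_or (q 0) (\<lambda>n. q (c n y))) \<in> L \<rightarrow>\<^sub>M N"
proof (rule measurable_sigma_sets[OF N])
  show "{U. openin mtopology U} \<subseteq> Pow M"
    using openin_subset by force
  show "(\<lambda>y. limit_or (q 0) (\<lambda>n. q (c n y))) \<in> space L \<rightarrow> M"
    using limit_or_in_carrier[OF complete] q(1) by (simp add: Pi_iff range_subsetD)
next
  fix U assume "U \<in> {U. openin mtopology U}"
  then have U: "openin mtopology U" by simp
  define \<sigma> where "\<sigma> y = (\<lambda>n. q (c n y))" for y
  have \<sigma>: "range (\<sigma> y) \<subseteq> M" for y
    using q(1) by (auto simp: \<sigma>_def)
  have "limit_or (q 0) (\<sigma> y) \<in> U \<longleftrightarrow>
      (MCauchy (\<sigma> y) \<and> (\<exists>k n. mball (q k) (2 / Suc n) \<subseteq> U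
                              \<and> (\<exists>N. \<forall>i\<ge>N. d (\<sigma> y i) (q k) < 1 / Suc n)))
      \<or> (\<not> MCauchy (\<sigma> y) \<and> q 0 \<in> U)" for y
    using limitin_open_iff_dense_sequence[OF q limitin_limit_or[OF complete] \<sigma> U]
    by (cases "MCauchy (\<sigma> y)") (auto simp: limit_or_def)
  moreover have "Measurable.pred L (\<lambda>y. d (\<sigma> y i) (\<sigma> y j) < r)" for i j r
    unfolding \<sigma>_def by (rule measurable_pred_count_space_pair[OF c c])
  moreover have "Measurable.pred L (\<lambda>y. d (\<sigma> y i) (q k) < r)" for i k r
    using measurable_pred_count_space_pair[OF c c, of "\<lambda>a b. d (q a) (q k) < r" i i]
    by (simp add: \<sigma>_def)
  ultimately have "Measurable.pred L (\<lambda>y. limit_or (q 0) (\<sigma> y) \<in> U)"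
    unfolding MCauchy_iff_inverse_Suc using \<sigma> by simp measurable
  then show "(\<lambda>y. limit_or (q 0) (\<lambda>n. q (c n y))) -` U \<inter> space L \<in> sets L"
    by (simp add: \<sigma>_def pred_def vimage_def Collect_conj_eq[symmetric])
qed

text \<open>The \<open>(k, n)\<close>-th bit of the code of \<open>x\<close> records whether \<open>d x (q k) < 1/(n+1)\<close>;
  decoding picks the first such \<open>k\<close> for each \<open>n\<close> and takes the limit.\<close>

lemma real_embeddable_if_polish:
  assumes complete: "mcomplete" and sep: "separable_space mtopology" and "M \<noteq> {}"
    and N: "space N = M" "sets N = sigma_sets M {U. openin mtopology U}"
  shows "real_embeddable N"
proof -
  obtain q :: "nat \<Rightarrow> 'a" where q: "range q \<subseteq> M" "\<And>x r. x \<in> M \<Longrightarrow> 0 < r \<Longrightarrow> \<exists>k. d x (q k) < r"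
    using separable_dense_sequence[OF sep \<open>M \<noteq> {}\<close>] by blast
  define bit where "bit x j = (case prod_decode j of (k, n) \<Rightarrow> d x (q k) < 1 / Suc n)" for x j
  define c where "c n y = (LEAST k. decode_bits y (prod_encode (k, n)))" for n y
  define h where "h y = limit_or (q 0) (\<lambda>n. q (c n y))" for y
  have "(\<lambda>x. encode_bits (bit x)) \<in> N \<rightarrow>\<^sub>M borel"
  proof (rule encode_bits_measurable)
    fix j
    obtain k n where kn: "prod_decode j = (k, n)"
      by fastforce
    have "{x \<in> space N. bit x j} = mball (q k) (1 / Suc n)"
      using q(1) N(1) by (auto simp: bit_def kn mball_def commute)
    then show "Measurable.pred N (\<lambda>x. bit x j)"
      unfolding pred_def using N(2) by (simp add: sigma_sets.Basic)
  qed
  moreover have "h \<in> borel \<rightarrow>\<^sub>M N"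
    unfolding h_def c_def by (rule measurable_limit_or[OF complete N(2) q]) measurable
  moreover have "h (encode_bits (bit x)) = x" if x: "x \<in> space N" for x
  proof -
    define \<sigma> where "\<sigma> n = q (c n (encode_bits (bit x)))" for n
    have "d x (\<sigma> n) < 1 / Suc n" for n
    proof -
      have "\<exists>k. d x (q k) < 1 / Suc n"
        using q(2) x N(1) by simp
      then have "d x (q (LEAST k. d x (q k) < 1 / Suc n)) < 1 / Suc n"
        by (rule LeastI_ex)
      then show ?thesis
        unfolding \<sigma>_def c_def by (simp add: bit_def)
    qed
    then have "limitin mtopology \<sigma> x sequentially"
      using x N(1) q(1) by (intro limitin_if_mdist_less_inverse_Suc) (auto simp: \<sigma>_def)
    moreover from this have "limitin mtopology \<sigma> (h (encode_bits (bit x))) sequentially"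
      unfolding h_def \<sigma>_def[symmetric]
      by (intro limitin_limit_or complete convergent_imp_MCauchy) (use q(1) in \<open>auto simp: \<sigma>_def\<close>)
    ultimately show ?thesis
      using limitin_metric_unique trivial_limit_sequentially by blast
  qed
  ultimately show ?thesis
    unfolding real_embeddable_def by blast
qed

end

section \<open>The unit square embeds into the reals\<close>

definition binary_digit :: "nat \<Rightarrow> real \<Rightarrow> bool" where
  "binary_digit n x \<longleftrightarrow> \<lfloor>2 ^ Suc n * x\<rfloor> - 2 * \<lfloor>2 ^ n * x\<rfloor> = 1"

lemma floor_double_cases: "\<lfloor>2 * (y::real)\<rfloor> = 2 * \<lfloor>y\<rfloor> \<or> \<lfloor>2 * y\<rfloor> = 2 * \<lfloor>y\<rfloor> + 1"
proof -
  have y: "real_of_int \<lfloor>y\<rfloor> \<le> y" "y < real_of_int \<lfloor>y\<rfloor> + 1"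
    by linarith+
  have "2 * \<lfloor>y\<rfloor> \<le> \<lfloor>2 * y\<rfloor>"
    using y by (simp add: le_floor_iff)
  moreover have "\<lfloor>2 * y\<rfloor> < 2 * \<lfloor>y\<rfloor> + 2"
    by (simp add: floor_less_iff) (use y in linarith)
  ultimately show ?thesis
    by linarith
qed

lemma floor_two_power_Suc:
  "\<lfloor>2 ^ Suc n * x\<rfloor> = 2 * \<lfloor>2 ^ n * x\<rfloor> + of_bool (binary_digit n x)"
  using floor_double_cases[of "2 ^ n * x"] by (auto simp: binary_digit_def mult.assoc)

lemma sum_binary_digits:
  assumes "x \<in> {0..<1}"
  shows "(\<Sum>n<N. of_bool (binary_digit n x) / (2::real) ^ Suc n) = \<lfloor>2 ^ N * x\<rfloor> / 2 ^ N"
proof (induction N)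
  case 0
  then show ?case
    using assms by (simp add: floor_eq_iff)
next
  case (Suc N)
  have "real_of_int \<lfloor>2 ^ Suc N * x\<rfloor> = 2 * \<lfloor>2 ^ N * x\<rfloor> + of_bool (binary_digit N x)"
    unfolding floor_two_power_Suc by simp
  with Suc show ?case
    by (simp add: field_simps)
qed

lemma sums_binary_digits:
  assumes x: "x \<in> {0..<1::real}"
  shows "(\<lambda>n. of_bool (binary_digit n x) / (2::real) ^ Suc n) sums x"
proof -
  have "\<bar>\<lfloor>2 ^ N * x\<rfloor> / 2 ^ N - x\<bar> \<le> (1 / 2) ^ N" for N :: nat
  proof -
    have "\<bar>real_of_int \<lfloor>2 ^ N * x\<rfloor> - 2 ^ N * x\<bar> \<le> 1"
      by linarith
    moreover have "\<lfloor>2 ^ N * x\<rfloor> / 2 ^ N - x = (\<lfloor>2 ^ N * x\<rfloor> - 2 ^ N * x) / 2 ^ N"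
      by (simp add: field_simps)
    ultimately have "\<bar>\<lfloor>2 ^ N * x\<rfloor> / 2 ^ N - x\<bar> \<le> 1 / 2 ^ N"
      by (simp add: abs_divide divide_right_mono)
    then show ?thesis
      by (simp add: power_one_over)
  qed
  then have "(\<lambda>N. \<lfloor>2 ^ N * x\<rfloor> / 2 ^ N - x) \<longlonglongrightarrow> 0"
    by (intro Lim_null_comparison[OF always_eventually LIMSEQ_power_zero]) auto
  then show ?thesis
    unfolding sums_def sum_binary_digits[OF x] by (simp add: LIM_zero_iff)
qed

lemma binary_digit_measurable [measurable]: "Measurable.pred borel (binary_digit n)"
  unfolding binary_digit_def by measurable

text \<open>Interleave the binary digits of the two coordinates.\<close>

lemma real_embeddable_unit_square: "real_embeddable (unitI \<Otimes>\<^sub>M unitI)"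
proof -
  have unitI_borel: "Measurable.pred unitI P" if "Measurable.pred borel P" for P
    unfolding unitI_def by (rule measurable_restrict_space1) (use that in simp)
  define bit where "bit p j = binary_digit (j div 2) (if even j then fst p else snd p)" for p j
  define u where "u y = (\<Sum>n. of_bool (decode_bits y (2 * n)) / (2::real) ^ Suc n)" for y
  define v where "v y = (\<Sum>n. of_bool (decode_bits y (2 * n + 1)) / (2::real) ^ Suc n)" for y
  define ok where "ok y \<longleftrightarrow> u y \<in> {0..<1} \<and> v y \<in> {0..<1}" for y
  define h where "h y = (if ok y then u y else 0, if ok y then v y else 0)" for y
  have "(\<lambda>p. encode_bits (bit p)) \<in> (unitI \<Otimes>\<^sub>M unitI) \<rightarrow>\<^sub>M borel"
  proof (rule encode_bits_measurable)
    fix j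
    have "Measurable.pred (unitI \<Otimes>\<^sub>M unitI) (\<lambda>p. binary_digit (j div 2) (fst p))"
      "Measurable.pred (unitI \<Otimes>\<^sub>M unitI) (\<lambda>p. binary_digit (j div 2) (snd p))"
      by (rule measurable_compose[OF measurable_fst unitI_borel[OF binary_digit_measurable]],
          rule measurable_compose[OF measurable_snd unitI_borel[OF binary_digit_measurable]])
    then show "Measurable.pred (unitI \<Otimes>\<^sub>M unitI) (\<lambda>p. bit p j)"
      unfolding bit_def by (cases "even j") simp_all
  qed
  moreover have "h \<in> borel \<rightarrow>\<^sub>M (unitI \<Otimes>\<^sub>M unitI)"
  proof -
    have into_unitI: "f \<in> borel \<rightarrow>\<^sub>M unitI" if "f \<in> borel_measurable borel" "\<And>y. f y \<in> {0..<1}" for f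
      unfolding unitI_def by (rule measurable_restrict_space2) (use that in auto)
    have u: "u \<in> borel_measurable borel" and v: "v \<in> borel_measurable borel"
      unfolding u_def v_def by measurable
    then have "Measurable.pred borel ok"
      unfolding ok_def by measurable
    then have "(\<lambda>y. if ok y then u y else 0) \<in> borel \<rightarrow>\<^sub>M unitI"
      "(\<lambda>y. if ok y then v y else 0) \<in> borel \<rightarrow>\<^sub>M unitI"
      by (intro into_unitI; use u v in \<open>measurable, auto simp: ok_def\<close>)+
    then show ?thesis
      unfolding h_def by (rule measurable_Pair)
  qed
  moreover have "h (encode_bits (bit p)) = p" if "p \<in> space (unitI \<Otimes>\<^sub>M unitI)" for p
  proof -
    have "fst p \<in> {0..<1}" "snd p \<in> {0..<1}"
      using that by (auto simp: space_pair_measure unitI_def space_restrict_space)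
    moreover have "u (encode_bits (bit p)) = fst p" "v (encode_bits (bit p)) = snd p"
      unfolding u_def v_def bit_def using sums_unique[OF sums_binary_digits] calculation
      by simp_all
    ultimately show ?thesis
      by (simp add: h_def ok_def)
  qed
  ultimately show ?thesis
    unfolding real_embeddable_def by blast
qed

lemma mm_space_metric: "mm_space X \<Longrightarrow> Metric_space (space (snd X)) (fst X)"
  by (cases X) (simp add: mm_space_def)

lemma mm_space_prob_space: "mm_space X \<Longrightarrow> prob_space (snd X)"
  by (cases X) (simp add: mm_space_def)

lemma mm_space_dist_nonneg: "mm_space X \<Longrightarrow> 0 \<le> fst X x y"
  using mm_space_metric unfolding Metric_space_def by blast

lemma mm_prod_eq:
  "mm_prod F X Z = ((\<lambda>(x, z) (x', z'). F (fst X x x') (fst Z z z')), snd X \<Otimes>\<^sub>M snd Z)"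
  by (cases X; cases Z) (simp add: mm_prod_def)

lemma exists_parameter:
  assumes "mm_space X"
  shows "\<exists>\<phi>. parameter X \<phi>"
proof -
  obtain d m where X: "X = (d, m)"
    by fastforce
  then interpret Metric_space "space m" d
    using mm_space_metric[OF assms] by simp
  have m: "mcomplete" "separable_space mtopology"
    "sets m = sigma_sets (space m) {U. openin mtopology U}" "prob_space m"
    using assms unfolding X mm_space_def by simp_all
  have "real_embeddable m"
    using real_embeddable_if_polish[OF m(1,2) prob_space.not_empty[OF m(4)] refl m(3)] .
  then show ?thesis
    unfolding parameter_def X using exists_parameter_if_real_embeddable[OF m(4)] by simp
qed

lemma exists_measure_preserving_unitI_square:
  "\<exists>\<alpha>. \<alpha> \<in> unitI \<rightarrow>\<^sub>M (unitI \<Otimes>\<^sub>M unitI) \<and> distr unitI (unitI \<Otimes>\<^sub>M unitI) \<alpha> = unitI \<Otimes>\<^sub>M unitI"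
  by (rule exists_parameter_if_real_embeddable
      [OF prob_space_pair[OF prob_space_unitI prob_space_unitI] real_embeddable_unit_square])

lemma parameter_mm_prod:
  assumes \<phi>: "parameter X \<phi>" and \<phi>': "parameter Z \<phi>'" and Z: "prob_space (snd Z)"
    and \<alpha>: "\<alpha> \<in> unitI \<rightarrow>\<^sub>M (unitI \<Otimes>\<^sub>M unitI)" "distr unitI (unitI \<Otimes>\<^sub>M unitI) \<alpha> = unitI \<Otimes>\<^sub>M unitI"
  shows "parameter (mm_prod F X Z) (\<lambda>s. (\<phi> (fst (\<alpha> s)), \<phi>' (snd (\<alpha> s))))"
proof -
  have m: "\<phi> \<in> unitI \<rightarrow>\<^sub>M snd X" "distr unitI (snd X) \<phi> = snd X"
    "\<phi>' \<in> unitI \<rightarrow>\<^sub>M snd Z" "distr unitI (snd Z) \<phi>' = snd Z"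
    using \<phi> \<phi>' by (auto simp: parameter_def)
  define \<Phi> where "\<Phi> = (\<lambda>(s, t). (\<phi> s, \<phi>' t))"
  have \<Phi>: "\<Phi> \<in> (unitI \<Otimes>\<^sub>M unitI) \<rightarrow>\<^sub>M (snd X \<Otimes>\<^sub>M snd Z)"
    unfolding \<Phi>_def using m(1,3) by measurable
  have eq: "(\<lambda>s. (\<phi> (fst (\<alpha> s)), \<phi>' (snd (\<alpha> s)))) = \<Phi> \<circ> \<alpha>"
    by (auto simp: \<Phi>_def case_prod_beta)
  have "distr unitI (snd X \<Otimes>\<^sub>M snd Z) (\<Phi> \<circ> \<alpha>)
      = distr (distr unitI (unitI \<Otimes>\<^sub>M unitI) \<alpha>) (snd X \<Otimes>\<^sub>M snd Z) \<Phi>"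
    using \<alpha>(1) \<Phi> by (simp add: distr_distr)
  also have "\<dots> = distr (unitI \<Otimes>\<^sub>M unitI) (snd X \<Otimes>\<^sub>M snd Z) \<Phi>"
    using \<alpha>(2) by simp
  also have "\<dots> = distr unitI (snd X) \<phi> \<Otimes>\<^sub>M distr unitI (snd Z) \<phi>'"
    unfolding \<Phi>_def using m(4) Z
    by (intro pair_measure_distr[symmetric] m(1,3)) (simp add: prob_space_imp_sigma_finite)
  finally show ?thesis
    using measurable_comp[OF \<alpha>(1) \<Phi>] m(2,4) unfolding parameter_def mm_prod_eq eq by simp
qed

lemma measure_preimage_Times:
  assumes \<alpha>: "\<alpha> \<in> unitI \<rightarrow>\<^sub>M (unitI \<Otimes>\<^sub>M unitI)" "distr unitI (unitI \<Otimes>\<^sub>M unitI) \<alpha> = unitI \<Otimes>\<^sub>M unitI"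
    and A: "A \<in> sets unitI" and B: "B \<in> sets unitI"
  shows "\<alpha> -` (A \<times> B) \<inter> space unitI \<in> sets unitI"
    and "measure unitI (\<alpha> -` (A \<times> B) \<inter> space unitI) = measure unitI A * measure unitI B"
proof -
  interpret P: prob_space unitI
    by (rule prob_space_unitI)
  have AB: "A \<times> B \<in> sets (unitI \<Otimes>\<^sub>M unitI)"
    using A B by (rule pair_measureI)
  then show "\<alpha> -` (A \<times> B) \<inter> space unitI \<in> sets unitI"
    by (rule measurable_sets[OF \<alpha>(1)])
  have "measure unitI (\<alpha> -` (A \<times> B) \<inter> space unitI) = measure (unitI \<Otimes>\<^sub>M unitI) (A \<times> B)"
    using measure_distr[OF \<alpha>(1) AB] \<alpha>(2) by simp
  also have "\<dots> = measure unitI A * measure unitI B"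
  proof -
    have "emeasure (unitI \<Otimes>\<^sub>M unitI) (A \<times> B) = ennreal (measure unitI A * measure unitI B)"
      using P.emeasure_pair_measure_Times[OF A B] by (simp add: P.emeasure_eq_measure ennreal_mult)
    then show ?thesis
      by (simp add: measure_def)
  qed
  finally show "measure unitI (\<alpha> -` (A \<times> B) \<inter> space unitI) = measure unitI A * measure unitI B" .
qed

section \<open>Estimates for functions in \<open>F\<^sup>2\<close>\<close>

lemma F2_triangle:
  assumes "F \<in> F2" "Metric_space (UNIV :: nat set) dA" "Metric_space (UNIV :: nat set) dB"
  shows "F (dA i k) (dB i' k') \<le> F (dA i j) (dB i' j') + F (dA j k) (dB j' k')"
proof -
  have "Metric_space (UNIV \<times> UNIV) (\<lambda>(x, y) (x', y'). F (dA x x') (dB y y'))"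
    using assms unfolding F2_def by blast
  from Metric_space.triangle[OF this, of "(i, i')" "(j, j')" "(k, k')"] show ?thesis
    by simp
qed

lemma F2_tendsto:
  assumes "F \<in> F2" "(f \<longlongrightarrow> s) G" "(g \<longlongrightarrow> t) G" "0 \<le> s" "0 \<le> t"
    and "\<forall>\<^sub>F x in G. 0 \<le> f x \<and> 0 \<le> g x"
  shows "((\<lambda>x. F (f x) (g x)) \<longlongrightarrow> F s t) G"
proof -
  have "continuous_on ({0..} \<times> {0..}) (\<lambda>(s, t). F s t)"
    using assms(1) unfolding F2_def by blast
  moreover have "\<forall>\<^sub>F x in G. (f x, g x) \<in> {0..} \<times> {0..}"
    using assms(6) by eventually_elim auto
  ultimately show ?thesis
    using continuous_on_tendsto_compose[OF _ tendsto_Pair[OF assms(2,3)]] assms(4,5) by fastforce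
qed

lemma F2_tendsto_at_right:
  assumes "F \<in> F2" "0 \<le> s" "0 \<le> t"
  shows "((\<lambda>\<delta>. F (s + \<delta>) (t + \<delta>)) \<longlongrightarrow> F s t) (at_right 0)"
proof (rule F2_tendsto[OF assms(1) _ _ assms(2,3)])
  show "\<forall>\<^sub>F \<delta> in at_right 0. 0 \<le> s + \<delta> \<and> 0 \<le> t + \<delta>"
    using eventually_at_right_less[of "0::real"] by eventually_elim (use assms in auto)
qed (auto intro!: tendsto_eq_intros)

lemma tendsto_F2_bound_at_right:
  assumes "F \<in> F2" "0 \<le> s" "0 \<le> t"
  shows "((\<lambda>\<delta>. max (s + \<delta> + (t + \<delta>)) (2 * F ((s + \<delta>) / 2) ((t + \<delta>) / 2)))
           \<longlongrightarrow> max (s + t) (2 * F (s / 2) (t / 2))) (at_right 0)"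
proof -
  have "\<forall>\<^sub>F \<delta> in at_right 0. 0 \<le> (s + \<delta>) / 2 \<and> 0 \<le> (t + \<delta>) / 2"
    using eventually_at_right_less[of "0::real"] by eventually_elim (use assms in auto)
  then have "((\<lambda>\<delta>. F ((s + \<delta>) / 2) ((t + \<delta>) / 2)) \<longlongrightarrow> F (s / 2) (t / 2)) (at_right 0)"
    using assms(2,3) by (intro F2_tendsto[OF assms(1)]) (auto intro!: tendsto_eq_intros)
  then show ?thesis
    by (auto intro!: tendsto_eq_intros)
qed

lemma Metric_space_line_plus_const:
  fixes x :: "nat \<Rightarrow> real"
  assumes "\<delta> > 0"
  shows "Metric_space UNIV (\<lambda>i j. \<bar>x i - x j\<bar> + (if i = j then 0 else \<delta>))"
  unfolding Metric_space_def
proof (intro conjI allI impI)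
  fix i j k :: nat
  have "\<bar>x i - x k\<bar> \<le> \<bar>x i - x j\<bar> + \<bar>x j - x k\<bar>"
    by linarith
  then show "\<bar>x i - x k\<bar> + (if i = k then 0 else \<delta>)
      \<le> \<bar>x i - x j\<bar> + (if i = j then 0 else \<delta>) + (\<bar>x j - x k\<bar> + (if j = k then 0 else \<delta>))"
    using assms by (cases "i = k"; cases "i = j"; cases "j = k") auto
qed (use assms in auto)

lemma Metric_space_isosceles:
  assumes "0 < \<alpha>" "0 < \<beta>" "\<alpha> \<le> 2 * \<beta>"
  shows "Metric_space (UNIV :: nat set) (\<lambda>i j. if i = j then 0 else if {i, j} = {0, 1} then \<alpha> else \<beta>)"
  unfolding Metric_space_def
proof (intro conjI allI impI)
  fix i j k :: nat
  show "(if i = k then 0 else if {i, k} = {0, 1} then \<alpha> else \<beta>)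
      \<le> (if i = j then 0 else if {i, j} = {0, 1} then \<alpha> else \<beta>)
        + (if j = k then 0 else if {j, k} = {0, 1} then \<alpha> else \<beta>)"
    using assms by (auto simp: doubleton_eq_iff)
qed (use assms in \<open>auto simp: insert_commute\<close>)

text \<open>The test configurations below are the points \<open>0, a', a\<close> of the line and an
  isosceles triangle with base \<open>u\<close> and legs \<open>e\<^sub>1/2\<close>.  Since \<open>F\<^sup>2\<close> only speaks about genuine
  metrics, where distinct points have positive distance, all distances are first raised
  by \<open>\<delta> > 0\<close>; continuity of \<open>F\<close> removes \<open>\<delta>\<close> afterwards.\<close>

lemma F2_le_add_F2_diff:
  assumes F: "F \<in> F2" and nonneg: "0 \<le> a" "0 \<le> a'" "0 \<le> b" "0 \<le> b'"
  shows "F a b \<le> F a' b' + F \<bar>a - a'\<bar> \<bar>b - b'\<bar>"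
proof (rule tendsto_le[OF trivial_limit_at_right_real])
  define xa where "xa = (\<lambda>i::nat. if i = 1 then a' else if i = 2 then a else 0)"
  define xb where "xb = (\<lambda>i::nat. if i = 1 then b' else if i = 2 then b else 0)"
  have le: "F (a + \<delta>) (b + \<delta>) \<le> F (a' + \<delta>) (b' + \<delta>) + F (\<bar>a - a'\<bar> + \<delta>) (\<bar>b - b'\<bar> + \<delta>)"
    if "\<delta> > 0" for \<delta>
    using F2_triangle[OF F Metric_space_line_plus_const[OF that, of xa]
        Metric_space_line_plus_const[OF that, of xb], of 0 2 0 2 1 1] nonneg
    by (simp add: xa_def xb_def abs_minus_commute)
  show "\<forall>\<^sub>F \<delta> in at_right 0.
      F (a + \<delta>) (b + \<delta>) \<le> F (a' + \<delta>) (b' + \<delta>) + F (\<bar>a - a'\<bar> + \<delta>) (\<bar>b - b'\<bar> + \<delta>)"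
    using eventually_at_right_less[of "0::real"] by eventually_elim (rule le)
  show "((\<lambda>\<delta>. F (a + \<delta>) (b + \<delta>)) \<longlongrightarrow> F a b) (at_right 0)"
    "((\<lambda>\<delta>. F (a' + \<delta>) (b' + \<delta>) + F (\<bar>a - a'\<bar> + \<delta>) (\<bar>b - b'\<bar> + \<delta>))
        \<longlongrightarrow> F a' b' + F \<bar>a - a'\<bar> \<bar>b - b'\<bar>) (at_right 0)"
    using nonneg by (auto intro!: tendsto_add F2_tendsto_at_right[OF F])
qed

lemma F2_le_twice_F2_half:
  assumes F: "F \<in> F2" and "0 \<le> u" "u \<le> e1" "0 \<le> v" "v \<le> e2"
  shows "F u v \<le> 2 * F (e1 / 2) (e2 / 2)"
proof (rule tendsto_le[OF trivial_limit_at_right_real])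
  have le: "F (u + \<delta>) (v + \<delta>) \<le> 2 * F (e1 / 2 + \<delta>) (e2 / 2 + \<delta>)" if "\<delta> > 0" for \<delta>
  proof -
    have "Metric_space (UNIV :: nat set)
        (\<lambda>i j. if i = j then 0 else if {i, j} = {0, 1} then u + \<delta> else e1 / 2 + \<delta>)"
      "Metric_space (UNIV :: nat set)
        (\<lambda>i j. if i = j then 0 else if {i, j} = {0, 1} then v + \<delta> else e2 / 2 + \<delta>)"
      using assms that by (auto intro!: Metric_space_isosceles)
    from F2_triangle[OF F this, of 0 1 0 1 2 2] show ?thesis
      by (simp add: doubleton_eq_iff)
  qed
  show "\<forall>\<^sub>F \<delta> in at_right 0. F (u + \<delta>) (v + \<delta>) \<le> 2 * F (e1 / 2 + \<delta>) (e2 / 2 + \<delta>)"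
    using eventually_at_right_less[of "0::real"] by eventually_elim (rule le)
  show "((\<lambda>\<delta>. F (u + \<delta>) (v + \<delta>)) \<longlongrightarrow> F u v) (at_right 0)"
    "((\<lambda>\<delta>. 2 * F (e1 / 2 + \<delta>) (e2 / 2 + \<delta>)) \<longlongrightarrow> 2 * F (e1 / 2) (e2 / 2)) (at_right 0)"
    using assms by (auto intro!: tendsto_mult F2_tendsto_at_right[OF F])
qed

lemma F2_abs_diff_le:
  assumes F: "F \<in> F2" and nonneg: "0 \<le> a" "0 \<le> a'" "0 \<le> b" "0 \<le> b'"
    and "\<bar>a - a'\<bar> \<le> e1" "\<bar>b - b'\<bar> \<le> e2"
  shows "\<bar>F a b - F a' b'\<bar> \<le> 2 * F (e1 / 2) (e2 / 2)"
proof -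
  have "F \<bar>a - a'\<bar> \<bar>b - b'\<bar> \<le> 2 * F (e1 / 2) (e2 / 2)"
    using assms by (intro F2_le_twice_F2_half[OF F]) auto
  moreover have "F a b \<le> F a' b' + F \<bar>a - a'\<bar> \<bar>b - b'\<bar>"
    by (rule F2_le_add_F2_diff[OF F nonneg])
  moreover have "F a' b' \<le> F a b + F \<bar>a - a'\<bar> \<bar>b - b'\<bar>"
    using F2_le_add_F2_diff[OF F nonneg(2,1,4,3)] by (simp add: abs_minus_commute)
  ultimately show ?thesis
    by linarith
qed

section \<open>Estimates for \<open>F\<^sub>p\<close>\<close>

definition pnorm2 :: "real \<Rightarrow> real \<Rightarrow> real \<Rightarrow> real" where
  "pnorm2 r a b = (a powr r + b powr r) powr (1 / r)"

lemma powr_increment_mono: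
  fixes s t h r :: real
  assumes r: "1 \<le> r" and st: "0 \<le> s" "s \<le> t" and h: "0 \<le> h"
  shows "(s + h) powr r - s powr r \<le> (t + h) powr r - t powr r"
proof (rule DERIV_nonneg_imp_increasing_open[OF st(2)])
  fix x assume x: "s < x" "x < t"
  then have "0 < x"
    using st by linarith
  then have "((\<lambda>x. (x + h) powr r - x powr r)
      has_real_derivative (r * (x + h) powr (r - 1) * 1 - r * x powr (r - 1))) (at x)"
    using h by (intro derivative_intros DERIV_chain2[OF has_real_derivative_powr])
      (auto intro!: derivative_eq_intros)
  moreover have "r * x powr (r - 1) \<le> r * (x + h) powr (r - 1)"
    using r h \<open>0 < x\<close> by (intro mult_left_mono powr_mono2) auto
  ultimately show "\<exists>y. ((\<lambda>x. (x + h) powr r - x powr r) has_real_derivative y) (at x) \<and> 0 \<le> y"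
    by (intro exI conjI) auto
next
  have powr: "continuous_on {0..} (\<lambda>x::real. x powr r)"
    using r by (intro continuous_on_powr' continuous_intros) auto
  have "continuous_on {s..t} (\<lambda>x. (x + h) powr r)"
    by (rule continuous_on_compose2[OF powr]) (use st h in \<open>auto intro!: continuous_intros\<close>)
  moreover have "continuous_on {s..t} (\<lambda>x. x powr r)"
    by (rule continuous_on_subset[OF powr]) (use st in auto)
  ultimately show "continuous_on {s..t} (\<lambda>x. (x + h) powr r - x powr r)"
    by (rule continuous_on_diff)
qed

text \<open>Minkowski's inequality for \<open>(a, b) + (h, 0)\<close>, via convexity of \<open>x \<mapsto> x\<^sup>r\<close>.\<close>

lemma pnorm2_add_le:
  assumes r: "1 \<le> r" and nonneg: "0 \<le> a" "0 \<le> b" "0 \<le> h"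
  shows "pnorm2 r (a + h) b \<le> pnorm2 r a b + h"
proof -
  define c where "c = pnorm2 r a b"
  have c: "0 \<le> c" "c powr r = a powr r + b powr r"
    unfolding c_def pnorm2_def using r by (simp_all add: powr_powr)
  have "a = (a powr r) powr (1 / r)"
    using r nonneg by (simp add: powr_powr)
  also have "\<dots> \<le> c"
    unfolding c_def pnorm2_def using r by (intro powr_mono2) auto
  finally have "(a + h) powr r - a powr r \<le> (c + h) powr r - c powr r"
    by (rule powr_increment_mono[OF r nonneg(1) _ nonneg(3)])
  then have "pnorm2 r (a + h) b \<le> ((c + h) powr r) powr (1 / r)"
    unfolding pnorm2_def using r c(2) by (intro powr_mono2) auto
  also have "\<dots> = c + h"
    using r c(1) nonneg by (simp add: powr_powr)
  finally show ?thesis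
    unfolding c_def .
qed

lemma pnorm2_lipschitz:
  assumes "1 \<le> r" "0 \<le> a" "0 \<le> a'" "0 \<le> b"
  shows "\<bar>pnorm2 r a b - pnorm2 r a' b\<bar> \<le> \<bar>a - a'\<bar>"
proof -
  have mono: "pnorm2 r x b \<le> pnorm2 r y b" if "0 \<le> x" "x \<le> y" for x y
    unfolding pnorm2_def using assms that by (intro powr_mono2 add_right_mono) auto
  show ?thesis
  proof (cases "a' \<le> a")
    case True
    then show ?thesis
      using pnorm2_add_le[of r a' b "a - a'"] mono[of a' a] assms by auto
  next
    case False
    then show ?thesis
      using pnorm2_add_le[of r a b "a' - a"] mono[of a a'] assms by auto
  qed
qed

lemma Fp_abs_diff_le:
  assumes p: "1 \<le> p" and nonneg: "0 \<le> a" "0 \<le> a'" "0 \<le> b" "0 \<le> b'"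
    and "\<bar>a - a'\<bar> \<le> e1" "\<bar>b - b'\<bar> \<le> e2"
  shows "\<bar>Fp p a b - Fp p a' b'\<bar> \<le> e1 + e2"
proof (cases "p = \<infinity>")
  case True
  then show ?thesis
    using assms by (simp add: Fp_def)
next
  case False
  define r where "r = real_of_ereal p"
  have r: "1 \<le> r"
    using p False unfolding r_def by (cases p) auto
  have Fp: "Fp p x y = pnorm2 r x y" for x y
    using False by (simp add: Fp_def pnorm2_def r_def)
  have "\<bar>pnorm2 r a b - pnorm2 r a' b\<bar> \<le> \<bar>a - a'\<bar>"
    by (rule pnorm2_lipschitz[OF r nonneg(1-3)])
  moreover have "\<bar>pnorm2 r b a' - pnorm2 r b' a'\<bar> \<le> \<bar>b - b'\<bar>"
    by (rule pnorm2_lipschitz[OF r nonneg(3,4,2)])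
  moreover have "pnorm2 r b a' = pnorm2 r a' b" "pnorm2 r b' a' = pnorm2 r a' b'"
    by (simp_all add: pnorm2_def add.commute)
  ultimately show ?thesis
    unfolding Fp using assms by linarith
qed

section \<open>Box distance of products\<close>

definition box_admissible :: "'a mm \<Rightarrow> 'b mm \<Rightarrow> real set" where
  "box_admissible X Y = {\<epsilon>. \<epsilon> \<ge> 0 \<and> (\<exists>\<phi> \<psi> I0. parameter X \<phi> \<and> parameter Y \<psi>
       \<and> I0 \<in> sets unitI \<and> measure unitI I0 \<ge> 1 - \<epsilon>
       \<and> (\<forall>s\<in>I0. \<forall>t\<in>I0. \<bar>fst X (\<phi> s) (\<phi> t) - fst Y (\<psi> s) (\<psi> t)\<bar> \<le> \<epsilon>))}"

lemma box_eq_Inf_admissible: "box X Y = Inf (box_admissible X Y)"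
  unfolding box_def box_admissible_def ..

lemma bdd_below_box_admissible: "bdd_below (box_admissible X Y)"
  unfolding box_admissible_def by (rule bdd_belowI[of _ 0]) auto

lemma box_le_admissible: "\<epsilon> \<in> box_admissible X Y \<Longrightarrow> box X Y \<le> \<epsilon>"
  unfolding box_eq_Inf_admissible by (rule cInf_lower[OF _ bdd_below_box_admissible])

lemma box_admissible_mono:
  assumes "\<epsilon> \<in> box_admissible X Y" "\<epsilon> \<le> \<epsilon>'"
  shows "\<epsilon>' \<in> box_admissible X Y"
proof -
  obtain \<phi> \<psi> I0 where I0: "parameter X \<phi>" "parameter Y \<psi>" "I0 \<in> sets unitI"
    "measure unitI I0 \<ge> 1 - \<epsilon>" "0 \<le> \<epsilon>"
    and close: "\<forall>s\<in>I0. \<forall>t\<in>I0. \<bar>fst X (\<phi> s) (\<phi> t) - fst Y (\<psi> s) (\<psi> t)\<bar> \<le> \<epsilon>"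
    using assms(1) unfolding box_admissible_def by auto
  have "\<forall>s\<in>I0. \<forall>t\<in>I0. \<bar>fst X (\<phi> s) (\<phi> t) - fst Y (\<psi> s) (\<psi> t)\<bar> \<le> \<epsilon>'"
    using close assms(2) by (meson order_trans)
  with I0 assms(2) show ?thesis
    unfolding box_admissible_def
    by (intro CollectI conjI exI[of _ \<phi>] exI[of _ \<psi>] exI[of _ I0]) simp_all
qed

lemma one_box_admissible:
  assumes "mm_space X" "mm_space Y"
  shows "1 \<in> box_admissible X Y"
proof -
  obtain \<phi> \<psi> where "parameter X \<phi>" "parameter Y \<psi>"
    using exists_parameter[OF assms(1)] exists_parameter[OF assms(2)] by blast
  then show ?thesis
    unfolding box_admissible_def
    by (intro CollectI conjI exI[of _ \<phi>] exI[of _ \<psi>] exI[of _ "{}"]) auto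
qed

lemma box_nonneg:
  assumes "mm_space X" "mm_space Y"
  shows "0 \<le> box X Y"
proof -
  have "box_admissible X Y \<noteq> {}"
    using one_box_admissible[OF assms] by blast
  then show ?thesis
    unfolding box_eq_Inf_admissible by (rule cInf_greatest) (simp add: box_admissible_def)
qed

lemma box_admissible_if_less:
  assumes "mm_space X" "mm_space Y" "box X Y < \<epsilon>"
  shows "\<epsilon> \<in> box_admissible X Y"
proof -
  have "box_admissible X Y \<noteq> {}"
    using one_box_admissible[OF assms(1,2)] by blast
  then obtain \<epsilon>' where "\<epsilon>' \<in> box_admissible X Y" "\<epsilon>' < \<epsilon>"
    using assms(3) cInf_less_iff[OF _ bdd_below_box_admissible]
    unfolding box_eq_Inf_admissible by blast
  then show ?thesis
    by (auto intro: box_admissible_mono)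
qed

lemma box_mm_prod_le:
  assumes mm: "mm_space X" "mm_space Y" "mm_space Z" "mm_space W"
    and \<epsilon>\<^sub>1: "\<epsilon>\<^sub>1 \<in> box_admissible X Y" and \<epsilon>\<^sub>2: "\<epsilon>\<^sub>2 \<in> box_admissible Z W"
    and F: "\<And>a a' b b'. 0 \<le> a \<Longrightarrow> 0 \<le> a' \<Longrightarrow> 0 \<le> b \<Longrightarrow> 0 \<le> b' \<Longrightarrow>
              \<bar>a - a'\<bar> \<le> \<epsilon>\<^sub>1 \<Longrightarrow> \<bar>b - b'\<bar> \<le> \<epsilon>\<^sub>2 \<Longrightarrow> \<bar>F a b - F a' b'\<bar> \<le> E"
    and E: "\<epsilon>\<^sub>1 + \<epsilon>\<^sub>2 \<le> E"
  shows "box (mm_prod F X Z) (mm_prod F Y W) \<le> E"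
proof -
  obtain \<phi> \<psi> I0 where I0: "parameter X \<phi>" "parameter Y \<psi>" "I0 \<in> sets unitI"
    "measure unitI I0 \<ge> 1 - \<epsilon>\<^sub>1" "\<forall>s\<in>I0. \<forall>t\<in>I0. \<bar>fst X (\<phi> s) (\<phi> t) - fst Y (\<psi> s) (\<psi> t)\<bar> \<le> \<epsilon>\<^sub>1"
    using \<epsilon>\<^sub>1 unfolding box_admissible_def by auto
  obtain \<phi>' \<psi>' J0 where J0: "parameter Z \<phi>'" "parameter W \<psi>'" "J0 \<in> sets unitI"
    "measure unitI J0 \<ge> 1 - \<epsilon>\<^sub>2" "\<forall>s\<in>J0. \<forall>t\<in>J0. \<bar>fst Z (\<phi>' s) (\<phi>' t) - fst W (\<psi>' s) (\<psi>' t)\<bar> \<le> \<epsilon>\<^sub>2"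
    using \<epsilon>\<^sub>2 unfolding box_admissible_def by auto
  obtain \<alpha> where \<alpha>: "\<alpha> \<in> unitI \<rightarrow>\<^sub>M (unitI \<Otimes>\<^sub>M unitI)"
    "distr unitI (unitI \<Otimes>\<^sub>M unitI) \<alpha> = unitI \<Otimes>\<^sub>M unitI"
    using exists_measure_preserving_unitI_square by blast
  define K where "K = \<alpha> -` (I0 \<times> J0) \<inter> space unitI"
  have "measure unitI K = measure unitI I0 * measure unitI J0"
    unfolding K_def by (rule measure_preimage_Times[OF \<alpha> I0(3) J0(3)])
  moreover have "measure unitI I0 \<le> 1" "measure unitI J0 \<le> 1"
    using prob_space.prob_le_1[OF prob_space_unitI] by auto
  ultimately have "measure unitI K \<ge> 1 - E"
    using I0(4) J0(4) E mult_right_mono[of "measure unitI I0" 1 "1 - measure unitI J0"]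
    by (simp add: algebra_simps)
  moreover have "\<bar>fst (mm_prod F X Z) (\<phi> (fst (\<alpha> s)), \<phi>' (snd (\<alpha> s))) (\<phi> (fst (\<alpha> t)), \<phi>' (snd (\<alpha> t)))
      - fst (mm_prod F Y W) (\<psi> (fst (\<alpha> s)), \<psi>' (snd (\<alpha> s))) (\<psi> (fst (\<alpha> t)), \<psi>' (snd (\<alpha> t)))\<bar> \<le> E"
    if "s \<in> K" "t \<in> K" for s t
    using that I0(5) J0(5) unfolding mm_prod_eq K_def
    by (auto intro!: F mm_space_dist_nonneg[OF mm(1)] mm_space_dist_nonneg[OF mm(2)]
        mm_space_dist_nonneg[OF mm(3)] mm_space_dist_nonneg[OF mm(4)])
  moreover have "0 \<le> E"
    using E \<epsilon>\<^sub>1 \<epsilon>\<^sub>2 by (auto simp: box_admissible_def)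
  ultimately have "E \<in> box_admissible (mm_prod F X Z) (mm_prod F Y W)"
    unfolding box_admissible_def
    using parameter_mm_prod[OF I0(1) J0(1) mm_space_prob_space[OF mm(3)] \<alpha>]
      parameter_mm_prod[OF I0(2) J0(2) mm_space_prob_space[OF mm(4)] \<alpha>]
      measure_preimage_Times(1)[OF \<alpha> I0(3) J0(3)]
    unfolding K_def by blast
  then show ?thesis
    by (rule box_le_admissible)
qed

lemma box_mm_prod_le_limit:
  assumes mm: "mm_space X" "mm_space Y" "mm_space Z" "mm_space W"
    and F: "\<And>\<epsilon>\<^sub>1 \<epsilon>\<^sub>2 a a' b b'. box X Y < \<epsilon>\<^sub>1 \<Longrightarrow> box Z W < \<epsilon>\<^sub>2 \<Longrightarrow>
              0 \<le> a \<Longrightarrow> 0 \<le> a' \<Longrightarrow> 0 \<le> b \<Longrightarrow> 0 \<le> b' \<Longrightarrow>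
              \<bar>a - a'\<bar> \<le> \<epsilon>\<^sub>1 \<Longrightarrow> \<bar>b - b'\<bar> \<le> \<epsilon>\<^sub>2 \<Longrightarrow> \<bar>F a b - F a' b'\<bar> \<le> E \<epsilon>\<^sub>1 \<epsilon>\<^sub>2"
    and E: "\<And>\<epsilon>\<^sub>1 \<epsilon>\<^sub>2. \<epsilon>\<^sub>1 + \<epsilon>\<^sub>2 \<le> E \<epsilon>\<^sub>1 \<epsilon>\<^sub>2"
    and lim: "((\<lambda>\<delta>. E (box X Y + \<delta>) (box Z W + \<delta>)) \<longlongrightarrow> L) (at_right 0)"
  shows "box (mm_prod F X Z) (mm_prod F Y W) \<le> L"
proof (rule tendsto_le[OF trivial_limit_at_right_real lim tendsto_const])
  have "box (mm_prod F X Z) (mm_prod F Y W) \<le> E (box X Y + \<delta>) (box Z W + \<delta>)" if "0 < \<delta>" for \<delta>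
  proof (rule box_mm_prod_le[OF mm _ _ _ E])
    show "box X Y + \<delta> \<in> box_admissible X Y" "box Z W + \<delta> \<in> box_admissible Z W"
      using that by (auto intro: box_admissible_if_less mm)
    show "\<bar>F a b - F a' b'\<bar> \<le> E (box X Y + \<delta>) (box Z W + \<delta>)"
      if "0 \<le> a" "0 \<le> a'" "0 \<le> b" "0 \<le> b'"
        "\<bar>a - a'\<bar> \<le> box X Y + \<delta>" "\<bar>b - b'\<bar> \<le> box Z W + \<delta>" for a a' b b'
      using that \<open>0 < \<delta>\<close> by (intro F) auto
  qed
  then show "\<forall>\<^sub>F \<delta> in at_right 0. box (mm_prod F X Z) (mm_prod F Y W) \<le> E (box X Y + \<delta>) (box Z W + \<delta>)"
    using eventually_at_right_less[of "0::real"] by (auto elim: eventually_mono)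
qed

theorem mainTheorem12:
  fixes X :: "'a mm" and Y :: "'b mm" and Z :: "'c mm" and W :: "'d mm"
    and F :: "real \<Rightarrow> real \<Rightarrow> real"
  assumes "mm_space X" "mm_space Y" "mm_space Z" "mm_space W"
    and "F \<in> F2"
  shows "box (mm_prod F X Z) (mm_prod F Y W)
           \<le> max (box X Y + box Z W) (2 * F (box X Y / 2) (box Z W / 2))
         \<and> (\<forall>p::ereal. 1 \<le> p \<longrightarrow>
           box (mm_prod (Fp p) X Z) (mm_prod (Fp p) Y W) \<le> box X Y + box Z W)"
proof (intro conjI allI impI)
  have lim: "((\<lambda>\<delta>. max (box X Y + \<delta> + (box Z W + \<delta>)) (2 * F ((box X Y + \<delta>) / 2) ((box Z W + \<delta>) / 2)))
      \<longlongrightarrow> max (box X Y + box Z W) (2 * F (box X Y / 2) (box Z W / 2))) (at_right 0)"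
    by (rule tendsto_F2_bound_at_right[OF assms(5) box_nonneg[OF assms(1,2)] box_nonneg[OF assms(3,4)]])
  show "box (mm_prod F X Z) (mm_prod F Y W)
      \<le> max (box X Y + box Z W) (2 * F (box X Y / 2) (box Z W / 2))"
  proof (rule box_mm_prod_le_limit[where E = "\<lambda>\<epsilon>\<^sub>1 \<epsilon>\<^sub>2. max (\<epsilon>\<^sub>1 + \<epsilon>\<^sub>2) (2 * F (\<epsilon>\<^sub>1 / 2) (\<epsilon>\<^sub>2 / 2))",
        OF assms(1-4) _ _ lim])
    fix \<epsilon>\<^sub>1 \<epsilon>\<^sub>2 a a' b b' :: real
    assume "0 \<le> a" "0 \<le> a'" "0 \<le> b" "0 \<le> b'" "\<bar>a - a'\<bar> \<le> \<epsilon>\<^sub>1" "\<bar>b - b'\<bar> \<le> \<epsilon>\<^sub>2"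
    from F2_abs_diff_le[OF assms(5) this]
    show "\<bar>F a b - F a' b'\<bar> \<le> max (\<epsilon>\<^sub>1 + \<epsilon>\<^sub>2) (2 * F (\<epsilon>\<^sub>1 / 2) (\<epsilon>\<^sub>2 / 2))"
      by linarith
  qed simp
next
  fix p :: ereal assume p: "1 \<le> p"
  have lim: "((\<lambda>\<delta>. box X Y + \<delta> + (box Z W + \<delta>)) \<longlongrightarrow> box X Y + box Z W) (at_right 0)"
    by (auto intro!: tendsto_eq_intros)
  show "box (mm_prod (Fp p) X Z) (mm_prod (Fp p) Y W) \<le> box X Y + box Z W"
    by (rule box_mm_prod_le_limit[where E = "(+)", OF assms(1-4) _ _ lim])
       (simp_all add: Fp_abs_diff_le[OF p])
qed

end
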